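(* Let $S$ be an affine semigroup and let $F$ be a face of $\mathrm{pos}(S)$ that is the intersection of $k$ facets $F_1=\mathrm{pos}(S)\cap H_1,\ldots,F_k=\mathrm{pos}(S)\cap H_k$, and let $\sigma_i$ be the primitive linear form associated with $H_i$ ($i=1,\ldots,k$). Suppose that (1) there exist $\gamma_1,\ldots,\gamma_k\in S$ such that $\sigma_i(\gamma_j)=\delta_{ij}$ for all $1\le i,j\le k$; and (2) $\mathrm{grp}(S\cap F)=\mathrm{grp}(S)\cap H_1\cap\cdots\cap H_k$. Then $S_F/U(S_F)$ is a free commutative monoid with basis the images of $\gamma_1,\ldots,\gamma_k$.
   Context: An affine semigroup is a finitely generated submonoid $S$ of $\mathbb{Z}^n$ (containing $0$) with $\mathrm{grp}(S)=\mathbb{Z}^n$. $\mathrm{pos}(S)$ is the set of nonnegative real linear combinations of elements of $S$; a face is its intersection with a supporting hyperplane, a facet is a face of codimension one. Each facet has the form $\mathrm{pos}(S)\cap H$ with $H=\{\sigma=0\}$, $\sigma$ a primitive linear form (relatively prime integer coefficients) with $\sigma\ge0$ on $\mathrm{pos}(S)$, the primitive linear form associated with $H$. $S_F=\{\alpha-\beta:\alpha\in S,\beta\in S\cap F\}$ and $U(S_F)=\mathrm{grp}(S\cap F)$ is its group of units. *)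

theory Defs
  imports "HOL-Analysis.Analysis"
begin

definition rvec :: "int ^ 'n \<Rightarrow> real ^ 'n" where
  "rvec a = (\<chi> j. real_of_int (a $ j))"

definition monoid_gen :: "(int ^ 'n) set \<Rightarrow> (int ^ 'n) set" where
  "monoid_gen G = {x. \<exists>A c. finite A \<and> A \<subseteq> G \<and> x = (\<Sum>g\<in>A. int (c g) *s g)}"

definition grp :: "(int ^ 'n) set \<Rightarrow> (int ^ 'n) set" where
  "grp A = \<Inter> {G. A \<subseteq> G \<and> 0 \<in> G \<and> (\<forall>x\<in>G. \<forall>y\<in>G. x - y \<in> G)}"

definition affine_semigroup :: "(int ^ 'n) set \<Rightarrow> bool" where
  "affine_semigroup S \<longleftrightarrow> (\<exists>G. finite G \<and> S = monoid_gen G) \<and> grp S = UNIV"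

definition pos :: "(int ^ 'n) set \<Rightarrow> (real ^ 'n) set" where
  "pos S = {y. \<exists>A c. finite A \<and> A \<subseteq> S \<and> (\<forall>a\<in>A. 0 \<le> c a) \<and>
                     y = (\<Sum>a\<in>A. c a *\<^sub>R rvec a)}"

text \<open>A linear form Z^n \<rightarrow> Z is given by its integer coefficient vector.\<close>
definition lf :: "int ^ 'n \<Rightarrow> int ^ 'n \<Rightarrow> int" where
  "lf c x = (\<Sum>j\<in>UNIV. c $ j * x $ j)"

definition rlf :: "int ^ 'n \<Rightarrow> real ^ 'n \<Rightarrow> real" where
  "rlf c y = (\<Sum>j\<in>UNIV. real_of_int (c $ j) * y $ j)"

definition hyp :: "int ^ 'n \<Rightarrow> (real ^ 'n) set" where
  "hyp c = {y. rlf c y = 0}"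

text \<open>Primitive: coefficients relatively prime (in particular not all zero).\<close>
definition primitive :: "int ^ 'n \<Rightarrow> bool" where
  "primitive c \<longleftrightarrow> Gcd (range (\<lambda>j. c $ j)) = 1"

definition pts_in :: "(int ^ 'n) set \<Rightarrow> (real ^ 'n) set \<Rightarrow> (int ^ 'n) set" where
  "pts_in S F = {a \<in> S. rvec a \<in> F}"

definition SF :: "(int ^ 'n) set \<Rightarrow> (real ^ 'n) set \<Rightarrow> (int ^ 'n) set" where
  "SF S F = {a - b | a b. a \<in> S \<and> b \<in> pts_in S F}"

definition qclass :: "int ^ 'n \<Rightarrow> (int ^ 'n) set \<Rightarrow> (int ^ 'n) set" where
  "qclass x U = (\<lambda>u. x + u) ` U"

text \<open>M/U is the free commutative monoid with basis the classes of b 0, ..., b (k-1):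
  the canonical monoid homomorphism N^k \<rightarrow> M/U, m \<mapsto> [sum m_i b_i], is a bijection
  onto the quotient M/U = {x + U | x in M}.\<close>
definition free_quotient_basis ::
  "(int ^ 'n) set \<Rightarrow> (int ^ 'n) set \<Rightarrow> (nat \<Rightarrow> int ^ 'n) \<Rightarrow> nat \<Rightarrow> bool" where
  "free_quotient_basis M U b k \<longleftrightarrow>
     bij_betw (\<lambda>m. qclass (\<Sum>i<k. int (m i) *s b i) U)
              {m :: nat \<Rightarrow> nat. \<forall>i\<ge>k. m i = 0}
              ((\<lambda>x. qclass x U) ` M)"

end

theory Submission
  imports Defs
begin

(* Let K be the common kernel of the forms sigma_1, ..., sigma_k on Z^n.
   Since grp S = Z^n, hypothesis (2) says exactly that U(S_F) = grp (S \<inter> F) = K, so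
   S_F/U(S_F) is the set of cosets x + K, x in S_F.  Two lattice points lie in the same
   coset iff they have the same values under all sigma_i, and by (1) the point
   sum_i m_i gamma_i has the values (m_1, ..., m_k).  Every x in S_F has nonnegative
   values sigma_i(x) (a point of S minus a point of F), so x is congruent to
   sum_i sigma_i(x) gamma_i; these sums lie in S_F, and distinct m give distinct cosets. *)

lemma lf_add: "lf c (x + y) = lf c x + lf c y"
  by (simp add: lf_def algebra_simps sum.distrib)

lemma lf_diff: "lf c (x - y) = lf c x - lf c y"
  by (simp add: lf_def algebra_simps sum_subtractf)

lemma lf_smult: "lf c (a *s x) = a * lf c x"
  by (simp add: lf_def sum_distrib_left algebra_simps)

lemma lf_sum: "lf c (sum f A) = (\<Sum>x\<in>A. lf c (f x))"
  by (induction A rule: infinite_finite_induct) (simp_all add: lf_add, simp_all add: lf_def)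

lemma rlf_rvec: "rlf c (rvec a) = real_of_int (lf c a)"
  by (simp add: rlf_def lf_def rvec_def)

lemma lf_dual_combination:
  fixes k :: nat
  assumes dual: "\<forall>i<k. \<forall>j<k. lf (\<sigma> i) (\<gamma> j) = (if i = j then 1 else 0)"
    and "i < k"
  shows "lf (\<sigma> i) (\<Sum>j<k. int (m j) *s \<gamma> j) = int (m i)"
proof -
  have "lf (\<sigma> i) (\<Sum>j<k. int (m j) *s \<gamma> j) = (\<Sum>j<k. if i = j then int (m j) else 0)"
    unfolding lf_sum lf_smult using dual \<open>i < k\<close> by (intro sum.cong) auto
  also have "\<dots> = int (m i)" using \<open>i < k\<close> by simp
  finally show ?thesis .
qed

lemma rvec_in_pos: "a \<in> S \<Longrightarrow> rvec a \<in> pos S"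
  unfolding pos_def by (rule CollectI, rule exI[of _ "{a}"], rule exI[of _ "\<lambda>_. 1"]) auto

lemma monoid_gen_zero: "0 \<in> monoid_gen G"
  unfolding monoid_gen_def by (rule CollectI, rule exI[of _ "{}"]) auto

lemma monoid_gen_enlarge_support:
  assumes "finite B" "A \<subseteq> B"
  shows "(\<Sum>g\<in>A. int (c g) *s g) = (\<Sum>g\<in>B. int (if g \<in> A then c g else 0) *s (g :: int ^ 'n))"
proof -
  have "(\<Sum>g\<in>A. int (c g) *s g) = (\<Sum>g\<in>A. int (if g \<in> A then c g else 0) *s g)"
    by (intro sum.cong) auto
  also have "\<dots> = (\<Sum>g\<in>B. int (if g \<in> A then c g else 0) *s g)"
    using assms by (intro sum.mono_neutral_left) auto
  finally show ?thesis .
qed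

lemma monoid_gen_add:
  assumes "x \<in> monoid_gen G" and "y \<in> monoid_gen G"
  shows "x + y \<in> monoid_gen G"
proof -
  obtain A c where A: "finite A" "A \<subseteq> G" "x = (\<Sum>g\<in>A. int (c g) *s g)"
    using assms(1) unfolding monoid_gen_def by blast
  obtain B d where B: "finite B" "B \<subseteq> G" "y = (\<Sum>g\<in>B. int (d g) *s g)"
    using assms(2) unfolding monoid_gen_def by blast
  define e where "e g = (if g \<in> A then c g else 0) + (if g \<in> B then d g else 0)" for g
  have "x + y = (\<Sum>g\<in>A \<union> B. int (if g \<in> A then c g else 0) *s g
                              + int (if g \<in> B then d g else 0) *s g)"
    unfolding sum.distrib A(3) B(3) using A(1) B(1)
    by (intro arg_cong2[where f = "(+)"] monoid_gen_enlarge_support) auto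
  also have "\<dots> = (\<Sum>g\<in>A \<union> B. int (e g) *s g)"
    by (intro sum.cong) (simp_all add: e_def vec_eq_iff distrib_right)
  finally show ?thesis
    unfolding monoid_gen_def using A B by blast
qed

lemma monoid_gen_smult:
  assumes x: "x \<in> monoid_gen G"
  shows "int m *s x \<in> monoid_gen G"
proof (induction m)
  case 0 then show ?case by (simp add: monoid_gen_zero)
next
  case (Suc m)
  have "int (Suc m) *s x = int m *s x + x" by (simp add: vec_eq_iff distrib_right)
  then show ?case using monoid_gen_add[OF Suc.IH x] by (simp add: add.commute)
qed

lemma monoid_gen_combination:
  fixes k :: nat
  assumes "\<forall>j<k. g j \<in> monoid_gen G"
  shows "(\<Sum>j<k. int (m j) *s g j) \<in> monoid_gen G"
  using assms by (induction k) (simp_all add: monoid_gen_zero monoid_gen_add monoid_gen_smult)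

lemma qclass_eq_iff:
  assumes K0: "0 \<in> K" and Kdiff: "\<forall>u\<in>K. \<forall>v\<in>K. u - v \<in> K"
  shows "qclass x K = qclass y K \<longleftrightarrow> x - y \<in> K"
proof
  assume "qclass x K = qclass y K"
  moreover have "x \<in> qclass x K" using K0 unfolding qclass_def by force
  ultimately obtain u where "u \<in> K" "x = y + u" unfolding qclass_def by auto
  then show "x - y \<in> K" by simp
next
  assume xy: "x - y \<in> K"
  have Kadd: "u + v \<in> K" if "u \<in> K" "v \<in> K" for u v
    using Kdiff K0 that by (metis diff_0 diff_minus_eq_add)
  have Kneg: "- u \<in> K" if "u \<in> K" for u
    using Kdiff K0 that by (metis diff_0)
  show "qclass x K = qclass y K"
  proof (intro equalityI subsetI)
    fix z assume "z \<in> qclass x K"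
    then obtain u where "u \<in> K" "z = y + ((x - y) + u)" unfolding qclass_def by auto
    then show "z \<in> qclass y K" using Kadd[OF xy] unfolding qclass_def by blast
  next
    fix z assume "z \<in> qclass y K"
    then obtain u where "u \<in> K" "z = x + (- (x - y) + u)" unfolding qclass_def by auto
    then show "z \<in> qclass x K" using Kadd[OF Kneg[OF xy]] unfolding qclass_def by blast
  qed
qed

lemma common_kernel_subgroup:
  shows "0 \<in> {x. \<forall>i<k. lf (\<sigma> i) x = 0}"
    and "\<forall>u\<in>{x. \<forall>i<k. lf (\<sigma> i) x = 0}. \<forall>v\<in>{x. \<forall>i<k. lf (\<sigma> i) x = 0}. u - v \<in> {x. \<forall>i<k. lf (\<sigma> i) x = 0}"
  by (simp add: lf_def) (simp add: lf_diff)

lemma free_quotient_basis_by_dual_forms: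
  fixes k :: nat
  assumes dual: "\<forall>i<k. \<forall>j<k. lf (\<sigma> i) (\<gamma> j) = (if i = j then 1 else 0)"
    and span: "\<And>m. (\<Sum>j<k. int (m j) *s \<gamma> j) \<in> M"
    and nonneg: "\<forall>x\<in>M. \<forall>i<k. 0 \<le> lf (\<sigma> i) x"
  shows "free_quotient_basis M {x. \<forall>i<k. lf (\<sigma> i) x = 0} \<gamma> k"
proof -
  define K where "K = {x. \<forall>i<k. lf (\<sigma> i) x = 0}"
  define comb where "comb m = (\<Sum>j<k. int (m j) *s \<gamma> j)" for m :: "nat \<Rightarrow> nat"
  define N where "N = {m :: nat \<Rightarrow> nat. \<forall>i\<ge>k. m i = 0}"
  have coords: "lf (\<sigma> i) (comb m) = int (m i)" if "i < k" for i m
    unfolding comb_def using lf_dual_combination[OF dual that] .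
  have same_class: "qclass x K = qclass y K \<longleftrightarrow> (\<forall>i<k. lf (\<sigma> i) x = lf (\<sigma> i) y)" for x y
    unfolding qclass_eq_iff[OF common_kernel_subgroup[of k \<sigma>, folded K_def]]
    by (simp add: K_def lf_diff)
  have "inj_on (\<lambda>m. qclass (comb m) K) N"
  proof (rule inj_onI)
    fix m m' assume "m \<in> N" "m' \<in> N" "qclass (comb m) K = qclass (comb m') K"
    then have "m i = m' i" if "i < k" for i
      using that by (simp add: same_class coords)
    moreover have "m i = m' i" if "\<not> i < k" for i
      using \<open>m \<in> N\<close> \<open>m' \<in> N\<close> that unfolding N_def by simp
    ultimately show "m = m'" by blast
  qed
  moreover have "(\<lambda>m. qclass (comb m) K) ` N = (\<lambda>x. qclass x K) ` M"
  proof (intro equalityI subsetI)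
    fix c assume "c \<in> (\<lambda>m. qclass (comb m) K) ` N"
    then show "c \<in> (\<lambda>x. qclass x K) ` M" using span unfolding comb_def by blast
  next
    fix c assume "c \<in> (\<lambda>x. qclass x K) ` M"
    then obtain x where x: "x \<in> M" "c = qclass x K" by blast
    define m where "m i = (if i < k then nat (lf (\<sigma> i) x) else 0)" for i
    have "qclass x K = qclass (comb m) K"
      unfolding same_class using x(1) nonneg by (simp add: coords m_def)
    moreover have "m \<in> N" by (simp add: N_def m_def)
    ultimately show "c \<in> (\<lambda>m. qclass (comb m) K) ` N" using x(2) by blast
  qed
  ultimately show ?thesis
    unfolding free_quotient_basis_def bij_betw_def K_def comb_def N_def by simp
qed

theorem mainTheorem5:
  fixes S :: "(int ^ 'n) set"
    and F :: "(real ^ 'n) set"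
    and k :: nat
    and \<sigma> :: "nat \<Rightarrow> int ^ 'n"
    and \<gamma> :: "nat \<Rightarrow> int ^ 'n"
  assumes aff: "affine_semigroup S"
    and prim: "\<forall>i<k. primitive (\<sigma> i)"
    and nonneg: "\<forall>i<k. \<forall>y\<in>pos S. 0 \<le> rlf (\<sigma> i) y"
    and facets: "\<forall>i<k. (pos S \<inter> hyp (\<sigma> i)) facet_of (pos S)"
    and face: "F face_of (pos S)"
    and F_def: "F = pos S \<inter> (\<Inter>i\<in>{..<k}. hyp (\<sigma> i))"
    and cond1: "(\<forall>j<k. \<gamma> j \<in> S) \<and>
                (\<forall>i<k. \<forall>j<k. lf (\<sigma> i) (\<gamma> j) = (if i = j then 1 else 0))"
    and cond2: "grp (pts_in S F) = grp S \<inter> {x. \<forall>i<k. lf (\<sigma> i) x = 0}"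
  shows "free_quotient_basis (SF S F) (grp (pts_in S F)) \<gamma> k"
proof -
  obtain G where G: "S = monoid_gen G" using aff unfolding affine_semigroup_def by blast
  have units: "grp (pts_in S F) = {x. \<forall>i<k. lf (\<sigma> i) x = 0}"
    using cond2 aff unfolding affine_semigroup_def by simp
  have F_pts: "b \<in> pts_in S F \<longleftrightarrow> b \<in> S \<and> (\<forall>i<k. lf (\<sigma> i) b = 0)" for b
    unfolding pts_in_def F_def hyp_def by (auto simp: rlf_rvec rvec_in_pos)
  have S_nonneg: "0 \<le> lf (\<sigma> i) a" if "a \<in> S" "i < k" for a i
    using nonneg rvec_in_pos[OF that(1)] that(2) by (metis of_int_0_le_iff rlf_rvec)
  have span: "(\<Sum>j<k. int (m j) *s \<gamma> j) \<in> SF S F" for m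
  proof -
    have "(\<Sum>j<k. int (m j) *s \<gamma> j) \<in> S"
      unfolding G using cond1 G by (intro monoid_gen_combination) simp
    moreover have "0 \<in> pts_in S F" using F_pts G by (simp add: monoid_gen_zero lf_def)
    ultimately show ?thesis unfolding SF_def by force
  qed
  have "\<forall>x\<in>SF S F. \<forall>i<k. 0 \<le> lf (\<sigma> i) x"
    unfolding SF_def using F_pts S_nonneg by (auto simp: lf_diff)
  then show ?thesis
    unfolding units using free_quotient_basis_by_dual_forms cond1 span by blast
qed

end
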